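(* Let $\bm{L}_t\in\mathbb{R}^{n_1\times n_1}$ be a diagonal matrix with positive diagonal entries. Let $\bm{X}_t,\bm{X}\in\mathbb{R}^{n_1\times n_2}$ be rank-$r$ matrices with compact SVDs $\bm{X}_t=\bm{U}_t\bm{\Sigma}_t\bm{V}_t^T$ and $\bm{X}=\bm{U}\bm{\Sigma}\bm{V}^T$ ($\bm{U}_t,\bm{U}\in\mathbb{R}^{n_1\times r}$ with orthonormal columns). Define $\widetilde{\bm{U}}_t=\bm{U}_t(\bm{U}_t^T\bm{L}_t^{1/4}\bm{U}_t)^{-1/2}$ and $\widetilde{\bm{U}}=\bm{U}(\bm{U}^T\bm{L}_t^{1/4}\bm{U})^{-1/2}$. Then $$\big\|\widetilde{\bm{U}}_t\widetilde{\bm{U}}_t^T\bm{L}_t^{1/4}-\widetilde{\bm{U}}\widetilde{\bm{U}}^T\bm{L}_t^{1/4}\big\|_{\bm{L}_t^{1/4}}\le\frac{\mathrm{cond}(\bm{L}_t^{3/8})}{\sigma_{\min}(\bm{X})}\,\|\bm{X}_t-\bm{X}\|_2.$$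
   Context: For symmetric positive definite $\bm{M}$, $\|\bm{x}\|_{\bm{M}}=\langle\bm{M}\bm{x},\bm{x}\rangle^{1/2}$ and for a square matrix $\bm{A}$, $\|\bm{A}\|_{\bm{M}}=\sup_{\bm{x}\neq0}\|\bm{A}\bm{x}\|_{\bm{M}}/\|\bm{x}\|_{\bm{M}}$. $\|\cdot\|_2$ is the spectral norm, $\sigma_{\min}(\bm{X})$ the smallest nonzero singular value of $\bm{X}$, and $\mathrm{cond}(\bm{Z})=\sigma_{\max}(\bm{Z})/\sigma_{\min}(\bm{Z})$. The columns of $\widetilde{\bm{U}}_t$, $\widetilde{\bm{U}}$ are orthonormal with respect to $\langle\bm{x},\bm{y}\rangle_{\bm{L}_t^{1/4}}=\langle\bm{L}_t^{1/4}\bm{x},\bm{y}\rangle$. In the paper $\bm{L}_t=\epsilon_t\bm{I}+\mathrm{diag}(\bm{G}_t\bm{G}_t^T)$, $\epsilon_t>0$. *)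

theory Defs
  imports "HOL-Analysis.Analysis"
begin

definition diag_powr :: "real^'n^'n \<Rightarrow> real \<Rightarrow> real^'n^'n" where
  "diag_powr L p = (\<chi> i j. if i = j then (L $ i $ i) powr p else 0)"

definition is_diagonal :: "real^'n^'n \<Rightarrow> bool" where
  "is_diagonal A \<longleftrightarrow> (\<forall>i j. i \<noteq> j \<longrightarrow> A $ i $ j = 0)"

definition sym_posdef :: "real^'n^'n \<Rightarrow> bool" where
  "sym_posdef A \<longleftrightarrow> transpose A = A \<and> (\<forall>x. x \<noteq> 0 \<longrightarrow> (A *v x) \<bullet> x > 0)"

definition inv_sqrt :: "real^'n^'n \<Rightarrow> real^'n^'n" where
  "inv_sqrt M = (THE S. sym_posdef S \<and> S ** S = matrix_inv M)"

definition vec_Mnorm :: "real^'n^'n \<Rightarrow> real^'n \<Rightarrow> real" where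
  "vec_Mnorm M x = sqrt ((M *v x) \<bullet> x)"

definition mat_Mnorm :: "real^'n^'n \<Rightarrow> real^'n^'n \<Rightarrow> real" where
  "mat_Mnorm M A = (SUP x\<in>{x. x \<noteq> 0}. vec_Mnorm M (A *v x) / vec_Mnorm M x)"

definition spec_norm :: "real^'n^'m \<Rightarrow> real" where
  "spec_norm A = onorm (\<lambda>x. A *v x)"

definition sing_vals :: "real^'n^'m \<Rightarrow> real set" where
  "sing_vals A = {sqrt e | e. e \<noteq> 0 \<and> (\<exists>v. v \<noteq> 0 \<and> (transpose A ** A) *v v = e *\<^sub>R v)}"

definition sigma_min :: "real^'n^'m \<Rightarrow> real" where
  "sigma_min A = Inf (sing_vals A)"

definition sigma_max :: "real^'n^'m \<Rightarrow> real" where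
  "sigma_max A = Sup (sing_vals A)"

definition cond :: "real^'n^'m \<Rightarrow> real" where
  "cond A = sigma_max A / sigma_min A"

end

theory Submission
  imports Defs
begin

(* Put R = L^(1/8). As L^(1/4) = R^T R, the map x -> R x carries the L^(1/4)-geometry
   isometrically onto Euclidean space, and it conjugates U~ U~^T L^(1/4), where
   U~ = U (U^T L^(1/4) U)^(-1/2), into P = B B^T with B = R U~ = R U ((R U)^T (R U))^(-1/2),
   the orthogonal polar factor of R U. So the L^(1/4)-norm in question is the spectral norm
   of P_t - P, a difference of Euclidean orthogonal projections of the same rank r, and for
   those |P_t - P| <= kappa as soon as |(I - P_t) P| <= kappa.
   This one-sided gap is a weighted Wedin bound: a vector R U w of range P equals R X y with
   |y| <= |w| / sigma_min X, and I - P_t annihilates R X_t y, so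
   (I - P_t) R U w = (I - P_t) R (X - X_t) y has norm at most
   |R| |X_t - X| |w| / sigma_min X <= |R| |R^-1| |X_t - X| |R U w| / sigma_min X,
   with |R| |R^-1| = cond (L^(1/8)) <= cond (L^(3/8)).
   The inverse square roots exist, and inv_sqrt is well defined, because symmetric matrices
   are orthogonally diagonalizable; this is proved variationally, a maximizer of the Rayleigh
   quotient on an invariant subspace being an eigenvector. *)

section \<open>Symmetric matrices are orthogonally diagonalizable\<close>

lemma linear_plus_quadratic_nonneg_imp_zero:
  fixes b c :: real
  assumes "\<And>t. 0 \<le> t * b + t\<^sup>2 * c"
  shows "b = 0"
proof (rule ccontr)
  assume "b \<noteq> 0"
  define t where "t = - b / (\<bar>c\<bar> + 1)"
  have "t\<^sup>2 * c \<le> t\<^sup>2 * \<bar>c\<bar>" by (simp add: mult_left_mono)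
  also have "\<dots> = b\<^sup>2 / (\<bar>c\<bar> + 1) * (\<bar>c\<bar> / (\<bar>c\<bar> + 1))"
    by (simp add: t_def power2_eq_square)
  also have "\<dots> < b\<^sup>2 / (\<bar>c\<bar> + 1) * 1"
    using \<open>b \<noteq> 0\<close> by (intro mult_strict_left_mono) auto
  also have "\<dots> = - (t * b)" by (simp add: t_def power2_eq_square)
  finally show False using assms[of t] by linarith
qed

lemma inner_matrix_transpose: "(A *v x) \<bullet> y = x \<bullet> (transpose A *v y)"
  for A :: "real^'n^'m"
  by (metis dot_lmul_matrix vector_transpose_matrix)

lemma symmetric_matrix_inner:
  fixes A :: "real^'n^'n"
  assumes "transpose A = A"
  shows "(A *v x) \<bullet> y = x \<bullet> (A *v y)"
  by (metis assms inner_matrix_transpose)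

lemma rayleigh_maximizer_is_eigenvector:
  fixes A :: "real^'n^'n"
  assumes sym: "transpose A = A" and W: "subspace W" and inv: "\<And>x. x \<in> W \<Longrightarrow> A *v x \<in> W"
    and v: "v \<in> W" "v \<bullet> v = 1"
    and max: "\<And>x. x \<in> W \<Longrightarrow> (A *v x) \<bullet> x \<le> ((A *v v) \<bullet> v) * (x \<bullet> x)"
  shows "A *v v = ((A *v v) \<bullet> v) *\<^sub>R v"
proof -
  define l where "l = (A *v v) \<bullet> v"
  have first_order: "(A *v v) \<bullet> x = l * (v \<bullet> x)" if x: "x \<in> W" for x
  proof -
    have "0 \<le> t * (2 * (l * (v \<bullet> x) - (A *v v) \<bullet> x)) + t\<^sup>2 * (l * (x \<bullet> x) - (A *v x) \<bullet> x)" for t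
    proof -
      have "v + t *\<^sub>R x \<in> W" using W v x by (simp add: subspace_add subspace_scale)
      then have le: "(A *v (v + t *\<^sub>R x)) \<bullet> (v + t *\<^sub>R x) \<le> l * ((v + t *\<^sub>R x) \<bullet> (v + t *\<^sub>R x))"
        using max by (simp add: l_def)
      have "(A *v x) \<bullet> v = (A *v v) \<bullet> x"
        using symmetric_matrix_inner[OF sym] by (simp add: inner_commute)
      then have "(A *v (v + t *\<^sub>R x)) \<bullet> (v + t *\<^sub>R x) = l + 2 * t * ((A *v v) \<bullet> x) + t\<^sup>2 * ((A *v x) \<bullet> x)"
        by (simp add: matrix_vector_right_distrib matrix_vector_mult_scaleR inner_add_left inner_add_right
            l_def power2_eq_square algebra_simps)
      moreover have "(v + t *\<^sub>R x) \<bullet> (v + t *\<^sub>R x) = 1 + 2 * t * (v \<bullet> x) + t\<^sup>2 * (x \<bullet> x)"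
        using v(2) inner_commute[of x v] by (simp add: inner_add_left inner_add_right power2_eq_square algebra_simps)
      ultimately show ?thesis using le by (simp add: algebra_simps)
    qed
    then show ?thesis using linear_plus_quadratic_nonneg_imp_zero by fastforce
  qed
  define w where "w = A *v v - l *\<^sub>R v"
  have "w \<in> W" using W inv v by (simp add: w_def subspace_diff subspace_scale)
  then have "w \<bullet> w = 0"
    using first_order[of w] v(2) by (simp add: w_def l_def inner_diff_left inner_diff_right inner_commute)
  then show ?thesis by (simp add: w_def l_def)
qed

lemma symmetric_matrix_has_eigenvector:
  fixes A :: "real^'n^'n"
  assumes sym: "transpose A = A" and W: "subspace W" and inv: "\<And>x. x \<in> W \<Longrightarrow> A *v x \<in> W"
    and nontrivial: "x0 \<in> W" "x0 \<noteq> 0"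
  obtains v where "v \<in> W" "norm v = 1" "A *v v = ((A *v v) \<bullet> v) *\<^sub>R v"
proof -
  define K where "K = W \<inter> sphere 0 1"
  have "compact K" unfolding K_def using closed_subspace[OF W] by (simp add: closed_Int_compact)
  moreover have "K \<noteq> {}"
  proof -
    have "x0 /\<^sub>R norm x0 \<in> K" using W nontrivial by (simp add: K_def subspace_scale)
    then show ?thesis by blast
  qed
  moreover have "continuous_on K (\<lambda>x. (A *v x) \<bullet> x)" by (intro continuous_intros)
  ultimately obtain v where vK: "v \<in> K" and vmax: "\<And>y. y \<in> K \<Longrightarrow> (A *v y) \<bullet> y \<le> (A *v v) \<bullet> v"
    using continuous_attains_sup[of K "\<lambda>x. (A *v x) \<bullet> x"] by blast
  have "(A *v x) \<bullet> x \<le> ((A *v v) \<bullet> v) * (x \<bullet> x)" if "x \<in> W" for x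
  proof (cases "x = 0")
    case False
    then have "x /\<^sub>R norm x \<in> K" using W that by (simp add: K_def subspace_scale)
    from vmax[OF this] have "((A *v x) \<bullet> x) / (norm x)\<^sup>2 \<le> (A *v v) \<bullet> v"
      by (simp add: matrix_vector_mult_scaleR power2_eq_square divide_inverse mult_ac)
    then show ?thesis using False by (simp add: pos_divide_le_eq power2_norm_eq_inner)
  qed simp
  with vK show ?thesis
    by (intro that rayleigh_maximizer_is_eigenvector[OF sym W inv])
      (auto simp: K_def dot_square_norm)
qed

lemma symmetric_matrix_orthonormal_eigenvectors:
  fixes A :: "real^'n^'n"
  assumes sym: "transpose A = A"
  shows "k \<le> CARD('n) \<Longrightarrow> \<exists>E. finite E \<and> card E = k \<and> pairwise orthogonal E \<and>
           (\<forall>e\<in>E. norm e = 1 \<and> A *v e = ((A *v e) \<bullet> e) *\<^sub>R e)"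
proof (induction k)
  case 0
  show ?case by (intro exI[of _ "{}"]) simp
next
  case (Suc k)
  then obtain E where E: "finite E" "card E = k" "pairwise orthogonal E"
    and eig: "\<forall>e\<in>E. norm e = 1 \<and> A *v e = ((A *v e) \<bullet> e) *\<^sub>R e"
    by auto
  define W where "W = {y. \<forall>e\<in>E. orthogonal e y}"
  have W: "subspace W" unfolding W_def by (rule subspace_orthogonal_to_vectors)
  have inv: "A *v y \<in> W" if "y \<in> W" for y
  proof -
    have "e \<bullet> (A *v y) = 0" if "e \<in> E" for e
      using eig \<open>e \<in> E\<close> \<open>y \<in> W\<close> symmetric_matrix_inner[OF sym, of e y]
      by (metis W_def inner_scaleR_left mem_Collect_eq mult_zero_right orthogonal_def)
    then show ?thesis by (simp add: W_def orthogonal_def)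
  qed
  have "dim E < DIM(real^'n)"
    using dim_le_card'[OF E(1)] E(2) Suc.prems by simp
  then obtain x0 where "x0 \<noteq> 0" "\<And>y. y \<in> span E \<Longrightarrow> orthogonal x0 y"
    using orthogonal_to_subspace_exists by blast
  then have "x0 \<in> W" by (auto simp: W_def orthogonal_commute span_base)
  then obtain v where v: "v \<in> W" "norm v = 1" "A *v v = ((A *v v) \<bullet> v) *\<^sub>R v"
    using symmetric_matrix_has_eigenvector[OF sym W inv] \<open>x0 \<noteq> 0\<close> by metis
  have "v \<notin> E" using v by (auto simp: W_def orthogonal_def)
  then have "card (insert v E) = Suc k" using E by simp
  moreover have "pairwise orthogonal (insert v E)"
    using E(3) v(1) by (auto simp: W_def pairwise_insert orthogonal_commute)
  ultimately show ?case using E(1) eig v by (intro exI[of _ "insert v E"]) auto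
qed

lemma diagonal_matrix_vector_mult:
  assumes "is_diagonal D"
  shows "D *v x = (\<chi> i. D $ i $ i * x $ i)"
proof -
  have "(\<Sum>j\<in>UNIV. D $ i $ j * x $ j) = D $ i $ i * x $ i" for i
    using assms by (subst sum.remove[of _ i]) (auto simp: is_diagonal_def intro!: sum.neutral)
  then show ?thesis by (simp add: matrix_vector_mult_def vec_eq_iff)
qed

lemma symmetric_matrix_diagonalization:
  fixes A :: "real^'n^'n"
  assumes sym: "transpose A = A"
  obtains Q D where "orthogonal_matrix Q" "is_diagonal D" "A = Q ** D ** transpose Q"
proof -
  obtain E where E: "finite E" "card E = CARD('n)" "pairwise orthogonal E"
    and eig: "\<forall>e\<in>E. norm e = 1 \<and> A *v e = ((A *v e) \<bullet> e) *\<^sub>R e"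
    using symmetric_matrix_orthonormal_eigenvectors[OF sym] by blast
  obtain f where f: "bij_betw f (UNIV :: 'n set) E"
    using finite_same_card_bij[of "UNIV :: 'n set" E] E(1,2) by auto
  define Q where "Q = (\<chi> i j. f j $ i)"
  define D :: "real^'n^'n" where "D = (\<chi> i j. if i = j then (A *v f i) \<bullet> f i else 0)"
  have col: "column j Q = f j" for j by (simp add: Q_def column_def)
  have fE: "f j \<in> E" for j using bij_betwE[OF f] by blast
  have "orthogonal (f i) (f j)" if "i \<noteq> j" for i j
    using E(3) fE bij_betw_imp_inj_on[OF f] that unfolding pairwise_def inj_on_def by blast
  then have "orthogonal_matrix Q"
    using eig fE by (simp add: orthogonal_matrix_orthonormal_columns col)
  moreover have "is_diagonal D" by (simp add: is_diagonal_def D_def)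
  moreover have "A ** Q = Q ** D"
  proof -
    have Dax: "D *v axis j 1 = ((A *v f j) \<bullet> f j) *\<^sub>R axis j 1" for j
      unfolding diagonal_matrix_vector_mult[OF \<open>is_diagonal D\<close>] by (simp add: vec_eq_iff axis_def D_def)
    have Qax: "Q *v axis j 1 = f j" for j by (simp add: matrix_vector_mult_basis col)
    have "column j (A ** Q) = column j (Q ** D)" for j
    proof -
      have "column j (A ** Q) = A *v f j"
        by (simp flip: matrix_vector_mult_basis matrix_vector_mul_assoc add: Qax)
      also have "\<dots> = ((A *v f j) \<bullet> f j) *\<^sub>R f j" using eig fE by blast
      also have "\<dots> = column j (Q ** D)"
        by (simp flip: matrix_vector_mult_basis matrix_vector_mul_assoc add: Dax Qax matrix_vector_mult_scaleR)
      finally show ?thesis .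
    qed
    then show ?thesis by (simp add: vec_eq_iff column_def)
  qed
  then have "A = Q ** D ** transpose Q"
    using \<open>orthogonal_matrix Q\<close>
    by (metis matrix_mul_assoc matrix_mul_rid orthogonal_matrix_def)
  ultimately show ?thesis by (rule that)
qed

section \<open>Diagonal powers and inverse square roots\<close>

lemma diag_powr_nth_diag [simp]: "diag_powr L p $ i $ i = L $ i $ i powr p"
  by (simp add: diag_powr_def)

lemma is_diagonal_diag_powr: "is_diagonal (diag_powr L p)"
  by (simp add: is_diagonal_def diag_powr_def)

lemma transpose_diag_powr [simp]: "transpose (diag_powr L p) = diag_powr L p"
  by (simp add: diag_powr_def transpose_def vec_eq_iff)

lemma diag_powr_mult_vector: "diag_powr L p *v x = (\<chi> i. L $ i $ i powr p * x $ i)"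
  by (simp add: diagonal_matrix_vector_mult[OF is_diagonal_diag_powr])

lemma diag_powr_mult:
  assumes "\<forall>i. L $ i $ i > 0"
  shows "diag_powr L p ** diag_powr L q = diag_powr L (p + q)"
  using assms by (simp add: matrix_eq flip: matrix_vector_mul_assoc)
    (simp add: diag_powr_mult_vector vec_eq_iff powr_add)

lemma diag_powr_zero:
  assumes "\<forall>i. L $ i $ i > 0"
  shows "diag_powr L 0 = mat 1"
  using assms by (simp add: diag_powr_def mat_def vec_eq_iff) (metis less_irrefl)

lemma diag_powr_one:
  assumes "is_diagonal L" "\<forall>i. L $ i $ i > 0"
  shows "diag_powr L 1 = L"
  using assms by (auto simp: diag_powr_def is_diagonal_def vec_eq_iff abs_of_pos)

lemma sym_posdef_diag_powr:
  assumes "\<forall>i. L $ i $ i > 0"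
  shows "sym_posdef (diag_powr L p)"
proof -
  have "(diag_powr L p *v x) \<bullet> x > 0" if "x \<noteq> 0" for x
  proof -
    obtain i where "x $ i \<noteq> 0" using \<open>x \<noteq> 0\<close> by (auto simp: vec_eq_iff)
    moreover have "0 < L $ j $ j powr p" for j using assms[rule_format, of j] by simp
    ultimately have "0 < (\<Sum>j\<in>UNIV. L $ j $ j powr p * (x $ j)\<^sup>2)"
      by (intro sum_pos2[of _ i]) auto
    then show ?thesis by (simp add: diag_powr_mult_vector inner_vec_def power2_eq_square mult.assoc)
  qed
  then show ?thesis by (simp add: sym_posdef_def)
qed

lemma sym_posdef_inj:
  assumes "sym_posdef A"
  shows "inj ((*v) A)"
proof (rule injI)
  fix x y assume "A *v x = A *v y"
  then have "(A *v (x - y)) \<bullet> (x - y) = 0" by (simp add: matrix_vector_mult_diff_distrib)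
  then show "x = y" using assms by (metis less_irrefl right_minus_eq sym_posdef_def)
qed

lemma sym_posdef_congruence:
  fixes B :: "real^'n^'n" and W :: "real^'m^'n"
  assumes B: "sym_posdef B" and W: "inj ((*v) W)"
  shows "sym_posdef (transpose W ** B ** W)"
proof -
  have "transpose (transpose W ** B ** W) = transpose W ** B ** W"
    using B by (simp add: sym_posdef_def matrix_transpose_mul matrix_mul_assoc)
  moreover have "((transpose W ** B ** W) *v x) \<bullet> x > 0" if "x \<noteq> 0" for x
  proof -
    have "W *v x \<noteq> 0" using W that by (metis injD matrix_vector_mult_0_right)
    then have "(B *v (W *v x)) \<bullet> (W *v x) > 0" using B by (simp add: sym_posdef_def)
    also have "(B *v (W *v x)) \<bullet> (W *v x) = (transpose W *v (B *v (W *v x))) \<bullet> x"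
      by (subst inner_matrix_transpose) simp
    also have "\<dots> = ((transpose W ** B ** W) *v x) \<bullet> x"
      by (simp only: matrix_vector_mul_assoc matrix_mul_assoc)
    finally show ?thesis .
  qed
  ultimately show ?thesis by (simp add: sym_posdef_def)
qed

lemma sym_posdef_gram:
  fixes A :: "real^'m^'n"
  assumes "inj ((*v) A)"
  shows "sym_posdef (transpose A ** A)"
proof -
  have "sym_posdef (mat 1 :: real^'n^'n)"
    by (simp add: sym_posdef_def)
  from sym_posdef_congruence[OF this assms] show ?thesis by simp
qed

lemma matrix_inv_eq:
  fixes A B :: "real^'n^'n"
  assumes "A ** B = mat 1"
  shows "matrix_inv A = B"
proof -
  have BA: "B ** A = mat 1" using assms matrix_left_right_inverse by blast
  then have "\<exists>A'. A ** A' = mat 1 \<and> A' ** A = mat 1" using assms by blast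
  then have "A ** matrix_inv A = mat 1"
    unfolding matrix_inv_def by (rule someI2_ex) simp
  then have "matrix_inv A = (B ** A) ** matrix_inv A" by (simp add: BA)
  also have "\<dots> = B" by (simp add: matrix_mul_assoc[symmetric] \<open>A ** matrix_inv A = mat 1\<close>)
  finally show ?thesis .
qed

lemma orthogonal_matrix_transpose_inj:
  fixes Q :: "real^'n^'n"
  assumes "orthogonal_matrix Q"
  shows "inj ((*v) Q)" and "inj ((*v) (transpose Q))"
  using assms unfolding orthogonal_matrix_def
  by (metis matrix_left_invertible_injective)+

lemma sym_posdef_inv_sqrt_exists:
  fixes G :: "real^'n^'n"
  assumes G: "sym_posdef G"
  shows "\<exists>S. sym_posdef S \<and> G ** (S ** S) = mat 1"
proof -
  obtain Q D where Q: "orthogonal_matrix Q" and D: "is_diagonal D" and GQ: "G = Q ** D ** transpose Q"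
    using G symmetric_matrix_diagonalization unfolding sym_posdef_def by metis
  have QtQ: "transpose Q ** Q = mat 1" "transpose Q ** (Q ** X) = X" for X :: "real^'n^'n"
    using Q by (simp_all add: orthogonal_matrix_def matrix_mul_assoc)
  have "transpose Q ** G ** Q = D"
    by (simp add: GQ matrix_mul_assoc[symmetric] QtQ)
  then have "sym_posdef D"
    using sym_posdef_congruence[OF G orthogonal_matrix_transpose_inj(1)[OF Q]] by simp
  moreover have "D $ i $ i = (D *v axis i 1) \<bullet> axis i 1" for i
    by (simp add: diagonal_matrix_vector_mult[OF D] inner_axis)
  ultimately have Dpos: "\<forall>i. D $ i $ i > 0" by (simp add: sym_posdef_def)
  define R where "R = diag_powr D (-1/2)"
  define S where "S = Q ** R ** transpose Q"
  have "sym_posdef S"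
    using sym_posdef_congruence[OF sym_posdef_diag_powr[OF Dpos] orthogonal_matrix_transpose_inj(2)[OF Q]]
    by (simp add: S_def R_def)
  moreover have "G ** (S ** S) = mat 1"
  proof -
    have "diag_powr D 1 ** (R ** R) = mat 1"
      by (simp add: R_def diag_powr_mult[OF Dpos] diag_powr_zero[OF Dpos])
    then have DD: "D ** (R ** (R ** X)) = X" for X :: "real^'n^'n"
      by (simp add: matrix_mul_assoc diag_powr_one[OF D Dpos])
    have "G ** (S ** S) = Q ** transpose Q"
      by (simp add: GQ S_def matrix_mul_assoc[symmetric] QtQ DD)
    then show ?thesis using Q by (simp add: orthogonal_matrix_def)
  qed
  ultimately show ?thesis by blast
qed

lemma sym_posdef_sqrt_diff_eigenvalue:
  fixes S T :: "real^'n^'n"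
  assumes S: "sym_posdef S" and T: "sym_posdef T" and ST: "S ** S = T ** T"
    and "q \<noteq> 0" and eig: "(S - T) *v q = \<mu> *\<^sub>R q"
  shows "\<mu> = 0"
proof -
  (* Pair S D + D T = S^2 - T^2 = 0, where D = S - T, with the eigenvector q. *)
  define D where "D = S - T"
  have "transpose D = D"
    using S T by (simp add: D_def sym_posdef_def transpose_def vec_eq_iff)
  have "S *v (S *v q) = T *v (T *v q)" by (simp add: matrix_vector_mul_assoc ST)
  then have "S *v (D *v q) + D *v (T *v q) = 0"
    by (simp add: D_def matrix_vector_mult_diff_rdistrib matrix_vector_mult_diff_distrib)
  then have "0 = (S *v (D *v q)) \<bullet> q + (T *v q) \<bullet> (D *v q)"
    using symmetric_matrix_inner[OF \<open>transpose D = D\<close>] by (metis inner_add_left inner_zero_left)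
  also have "\<dots> = \<mu> * ((S *v q) \<bullet> q + (T *v q) \<bullet> q)"
    using eig by (simp add: D_def matrix_vector_mult_scaleR algebra_simps)
  finally show ?thesis
    using S T \<open>q \<noteq> 0\<close> unfolding sym_posdef_def
    by (metis add_pos_pos less_irrefl mult_eq_0_iff)
qed

lemma sym_posdef_sqrt_unique:
  fixes S T :: "real^'n^'n"
  assumes S: "sym_posdef S" and T: "sym_posdef T" and ST: "S ** S = T ** T"
  shows "S = T"
proof -
  have "transpose (S - T) = S - T"
    using S T by (simp add: sym_posdef_def transpose_def vec_eq_iff)
  then obtain Q \<Lambda> where Q: "orthogonal_matrix Q" and \<Lambda>: "is_diagonal \<Lambda>"
    and DQ: "S - T = Q ** \<Lambda> ** transpose Q"
    using symmetric_matrix_diagonalization by metis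
  have "\<Lambda> $ j $ j = 0" for j
  proof (rule sym_posdef_sqrt_diff_eigenvalue[OF S T ST])
    show "Q *v axis j 1 \<noteq> 0"
      using orthogonal_matrix_transpose_inj(1)[OF Q] by (metis axis_eq_0_iff injD matrix_vector_mult_0_right zero_neq_one)
    have "(S - T) *v (Q *v axis j 1) = Q *v (\<Lambda> *v axis j 1)"
      using Q by (simp add: DQ matrix_vector_mul_assoc orthogonal_matrix_def matrix_mul_assoc[symmetric])
    also have "\<Lambda> *v axis j 1 = \<Lambda> $ j $ j *\<^sub>R axis j 1"
      by (simp add: diagonal_matrix_vector_mult[OF \<Lambda>] vec_eq_iff axis_def)
    finally show "(S - T) *v (Q *v axis j 1) = \<Lambda> $ j $ j *\<^sub>R (Q *v axis j 1)"
      by (simp add: matrix_vector_mult_scaleR)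
  qed
  with \<Lambda> have "\<Lambda> = 0" unfolding is_diagonal_def vec_eq_iff by (metis zero_index)
  then show ?thesis using DQ by simp
qed

lemma inv_sqrt:
  fixes G :: "real^'n^'n"
  assumes "sym_posdef G"
  shows "sym_posdef (inv_sqrt G)" and "G ** (inv_sqrt G ** inv_sqrt G) = mat 1"
proof -
  obtain S0 where S0: "sym_posdef S0" "G ** (S0 ** S0) = mat 1"
    using sym_posdef_inv_sqrt_exists[OF assms] by blast
  have inv: "matrix_inv G = S0 ** S0" by (rule matrix_inv_eq[OF S0(2)])
  have "\<exists>!S. sym_posdef S \<and> S ** S = matrix_inv G"
    using S0 sym_posdef_sqrt_unique unfolding inv by blast
  then have "sym_posdef (inv_sqrt G) \<and> inv_sqrt G ** inv_sqrt G = matrix_inv G"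
    unfolding inv_sqrt_def by (rule theI')
  then show "sym_posdef (inv_sqrt G)" and "G ** (inv_sqrt G ** inv_sqrt G) = mat 1"
    using S0 inv by simp_all
qed

section \<open>Orthogonal projections of equal rank\<close>

definition is_orthogonal_projection :: "('a::real_inner \<Rightarrow> 'a) \<Rightarrow> bool" where
  "is_orthogonal_projection P \<longleftrightarrow> linear P \<and> (\<forall>x. P (P x) = P x) \<and> (\<forall>x y. P x \<bullet> y = x \<bullet> P y)"

lemma orthogonal_projection_pythagoras:
  assumes "is_orthogonal_projection P"
  shows "(norm x)\<^sup>2 = (norm (P x))\<^sup>2 + (norm (x - P x))\<^sup>2"
proof -
  have "P x \<bullet> (x - P x) = 0"
    using assms unfolding is_orthogonal_projection_def by (metis inner_diff_right linear_diff right_minus_eq)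
  then have "(norm (P x + (x - P x)))\<^sup>2 = (norm (P x))\<^sup>2 + (norm (x - P x))\<^sup>2"
    by (intro norm_add_Pythagorean) (simp add: orthogonal_def)
  then show ?thesis by simp
qed

lemma orthogonal_projection_residual_le:
  assumes "is_orthogonal_projection P"
  shows "norm (x - P x) \<le> norm x"
proof -
  have "(norm (x - P x))\<^sup>2 \<le> (norm x)\<^sup>2"
    using orthogonal_projection_pythagoras[OF assms, of x] by simp
  then show ?thesis by (rule power2_le_imp_le) simp
qed

lemma orthogonal_projection_image_eq:
  fixes P Q :: "'a::euclidean_space \<Rightarrow> 'a"
  assumes P: "is_orthogonal_projection P" and Q: "is_orthogonal_projection Q"
    and rank: "dim (range P) = dim (range Q)" and "\<kappa> < 1"
    and gap: "\<And>z. norm (P z - Q (P z)) \<le> \<kappa> * norm (P z)"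
  shows "Q ` range P = range Q"
proof -
  have linP: "linear P" and linQ: "linear Q" using P Q by (simp_all add: is_orthogonal_projection_def)
  have subP: "subspace (range P)" and subQ: "subspace (range Q)"
    using linear_subspace_image[OF linP subspace_UNIV] linear_subspace_image[OF linQ subspace_UNIV] by simp_all
  have "inj_on Q (range P)"
    unfolding linear_inj_on_iff_eq_0[OF linQ subP]
  proof clarify
    fix y assume "Q (P y) = 0"
    then have "norm (P y) \<le> \<kappa> * norm (P y)" using gap[of y] P by (simp add: is_orthogonal_projection_def)
    then have "(1 - \<kappa>) * norm (P y) \<le> 0" by (simp add: algebra_simps)
    then show "P y = 0" using \<open>\<kappa> < 1\<close> by (simp add: mult_le_0_iff)
  qed
  then have "dim (Q ` range P) = dim (range P)"
    using dim_image_eq[OF linQ, of "range P"] span_eq_iff[THEN iffD2, OF subP] by simp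
  then show ?thesis
    using rank linear_subspace_image[OF linQ subP] subQ by (intro subspace_dim_equal) auto
qed

lemma scaled_sq_le_of_sq_le_mult:
  fixes a b c k :: real
  assumes "0 \<le> k" and ab: "a\<^sup>2 \<le> b * c" and ca: "k * c\<^sup>2 \<le> a\<^sup>2"
  shows "k * a\<^sup>2 \<le> b\<^sup>2"
proof (cases "a = 0")
  case False
  have "(k * a\<^sup>2) * a\<^sup>2 = k * (a\<^sup>2)\<^sup>2" by (simp only: power2_eq_square mult.assoc)
  also have "\<dots> \<le> k * (b * c)\<^sup>2"
    using mult_left_mono[OF power_mono[OF ab zero_le_power2] \<open>0 \<le> k\<close>] .
  also have "\<dots> = b\<^sup>2 * (k * c\<^sup>2)" by (simp add: power_mult_distrib mult_ac)
  also have "\<dots> \<le> b\<^sup>2 * a\<^sup>2" using mult_left_mono[OF ca zero_le_power2] .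
  finally show ?thesis using False by simp
qed simp

lemma orthogonal_projection_gap_iff:
  assumes Q: "is_orthogonal_projection Q" and "0 \<le> \<kappa>"
  shows "norm (w - Q w) \<le> \<kappa> * norm w \<longleftrightarrow> (1 - \<kappa>\<^sup>2) * (norm w)\<^sup>2 \<le> (norm (Q w))\<^sup>2"
proof -
  have "norm (w - Q w) \<le> \<kappa> * norm w \<longleftrightarrow> (norm (w - Q w))\<^sup>2 \<le> (\<kappa> * norm w)\<^sup>2"
    using \<open>0 \<le> \<kappa>\<close> by (simp add: abs_le_square_iff[symmetric])
  moreover have "(norm (w - Q w))\<^sup>2 = (norm w)\<^sup>2 - (norm (Q w))\<^sup>2"
    using orthogonal_projection_pythagoras[OF Q, of w] by simp
  moreover have "(1 - \<kappa>\<^sup>2) * (norm w)\<^sup>2 = (norm w)\<^sup>2 - (\<kappa> * norm w)\<^sup>2"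
    by (simp add: left_diff_distrib power_mult_distrib)
  ultimately show ?thesis by linarith
qed

lemma orthogonal_projection_gap_swap:
  fixes P Q :: "'a::euclidean_space \<Rightarrow> 'a"
  assumes P: "is_orthogonal_projection P" and Q: "is_orthogonal_projection Q"
    and rank: "dim (range P) = dim (range Q)" and "0 \<le> \<kappa>"
    and gap: "\<And>z. norm (P z - Q (P z)) \<le> \<kappa> * norm (P z)"
  shows "norm (Q u - P (Q u)) \<le> \<kappa> * norm (Q u)"
proof (cases "\<kappa> < 1")
  case False
  then have "norm (Q u) \<le> \<kappa> * norm (Q u)" using mult_right_mono[of 1 \<kappa> "norm (Q u)"] by simp
  then show ?thesis using orthogonal_projection_residual_le[OF P, of "Q u"] by linarith
next
  case True
  (* Now Q maps range P onto range Q, so v = Q u is Q w with w in range P. Cauchy-Schwarz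
     on |v|^2 = <P v, w>, together with |v| >= sqrt (1 - kappa^2) |w|, bounds |P v| from below. *)
  have Pidem: "P (P x) = P x" and Psa: "P x \<bullet> y = x \<bullet> P y"
    and Qidem: "Q (Q x) = Q x" and Qsa: "Q x \<bullet> y = x \<bullet> Q y" for x y
    using P Q by (simp_all add: is_orthogonal_projection_def)
  define v where "v = Q u"
  have "v \<in> Q ` range P" unfolding v_def orthogonal_projection_image_eq[OF P Q rank True gap] by simp
  then obtain y where "v = Q (P y)" by blast
  define w where "w = P y"
  have Pw: "P w = w" and Qw: "Q w = v" using \<open>v = Q (P y)\<close> by (simp_all add: w_def Pidem)
  have lower: "(1 - \<kappa>\<^sup>2) * (norm w)\<^sup>2 \<le> (norm v)\<^sup>2"
    using orthogonal_projection_gap_iff[OF Q \<open>0 \<le> \<kappa>\<close>, of w] gap[of w] by (simp add: Pw Qw)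
  have cauchy_schwarz: "(norm v)\<^sup>2 \<le> norm (P v) * norm w"
  proof -
    have "(norm v)\<^sup>2 = Q w \<bullet> Q w" by (simp add: Qw power2_norm_eq_inner)
    also have "\<dots> = Q w \<bullet> w" by (simp only: Qsa Qidem)
    also have "\<dots> = P v \<bullet> w" by (simp only: Psa Pw Qw)
    also have "\<dots> \<le> norm (P v) * norm w" by (rule norm_cauchy_schwarz)
    finally show ?thesis .
  qed
  have "\<kappa>\<^sup>2 \<le> 1" using \<open>0 \<le> \<kappa>\<close> True by (intro power_le_one) auto
  then have "(1 - \<kappa>\<^sup>2) * (norm v)\<^sup>2 \<le> (norm (P v))\<^sup>2"
    using scaled_sq_le_of_sq_le_mult[OF _ cauchy_schwarz lower] by simp
  then have "norm (v - P v) \<le> \<kappa> * norm v"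
    using orthogonal_projection_gap_iff[OF P \<open>0 \<le> \<kappa>\<close>] by blast
  then show ?thesis by (simp add: v_def)
qed

lemma orthogonal_projection_gap_kernel:
  assumes P: "is_orthogonal_projection P" and Q: "is_orthogonal_projection Q" and "0 \<le> \<kappa>"
    and gap: "\<And>u. norm (Q u - P (Q u)) \<le> \<kappa> * norm (Q u)"
  shows "norm (Q (x - P x)) \<le> \<kappa> * norm (x - P x)"
proof -
  have Psa: "P x \<bullet> y = x \<bullet> P y" and Qsa: "Q x \<bullet> y = x \<bullet> Q y" and Qidem: "Q (Q x) = Q x" for x y
    using P Q by (simp_all add: is_orthogonal_projection_def)
  define a where "a = x - P x"
  define v where "v = Q a"
  have "P a = 0" using P by (simp add: a_def is_orthogonal_projection_def linear_diff)
  have "(norm v)\<^sup>2 = a \<bullet> Q v" by (simp add: power2_norm_eq_inner v_def Qsa)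
  also have "\<dots> = a \<bullet> (v - P v)" by (simp add: v_def Qidem inner_diff_right Psa[symmetric] \<open>P a = 0\<close>)
  also have "\<dots> \<le> norm a * norm (v - P v)" by (rule norm_cauchy_schwarz)
  also have "\<dots> \<le> norm a * (\<kappa> * norm v)" using gap[of a] by (simp add: v_def mult_left_mono)
  finally have "norm v * norm v \<le> (\<kappa> * norm a) * norm v" by (simp add: power2_eq_square mult_ac)
  then have "norm v \<le> \<kappa> * norm a"
    using \<open>0 \<le> \<kappa>\<close> by (cases "v = 0") (simp_all add: mult_le_cancel_right)
  then show ?thesis by (simp add: v_def a_def)
qed

lemma orthogonal_projection_diff_le:
  fixes P Q :: "'a::euclidean_space \<Rightarrow> 'a"
  assumes P: "is_orthogonal_projection P" and Q: "is_orthogonal_projection Q"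
    and rank: "dim (range P) = dim (range Q)" and "0 \<le> \<kappa>"
    and gap: "\<And>z. norm (P z - Q (P z)) \<le> \<kappa> * norm (P z)"
  shows "norm (Q x - P x) \<le> \<kappa> * norm x"
proof -
  have linQ: "linear Q" and Qsa: "Q x \<bullet> y = x \<bullet> Q y" and Qidem: "Q (Q x) = Q x" for x y
    using Q by (simp_all add: is_orthogonal_projection_def)
  define a where "a = x - P x"
  define b where "b = P x"
  have "norm (Q a) \<le> \<kappa> * norm a"
    unfolding a_def using orthogonal_projection_gap_swap[OF P Q rank \<open>0 \<le> \<kappa>\<close> gap]
    by (rule orthogonal_projection_gap_kernel[OF P Q \<open>0 \<le> \<kappa>\<close>])
  then have a_bound: "(norm (Q a))\<^sup>2 \<le> (\<kappa> * norm a)\<^sup>2" by (rule power_mono) simp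
  have "norm (b - Q b) \<le> \<kappa> * norm b" using gap[of x] by (simp add: b_def)
  then have b_bound: "(norm (b - Q b))\<^sup>2 \<le> (\<kappa> * norm b)\<^sup>2" by (rule power_mono) simp
  have "Q x - P x = Q a + - (b - Q b)"
    using linear_add[OF linQ, of a b] by (simp add: a_def b_def)
  moreover have "orthogonal (Q a) (- (b - Q b))"
    by (simp add: orthogonal_def Qsa Qidem linear_diff[OF linQ] inner_diff_right)
  ultimately have "(norm (Q x - P x))\<^sup>2 = (norm (Q a))\<^sup>2 + (norm (b - Q b))\<^sup>2"
    by (simp add: norm_add_Pythagorean norm_minus_commute)
  also have "\<dots> \<le> (\<kappa> * norm x)\<^sup>2"
    using a_bound b_bound orthogonal_projection_pythagoras[OF P, of x]
    by (simp add: a_def b_def power_mult_distrib distrib_left)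
  finally show ?thesis by (rule power2_le_imp_le) (simp add: \<open>0 \<le> \<kappa>\<close>)
qed

section \<open>Polar factors and a weighted Wedin bound\<close>

lemma orthonormal_columns_inj:
  fixes B :: "real^'r^'n"
  assumes "transpose B ** B = mat 1"
  shows "inj ((*v) B)"
  using assms matrix_left_invertible_injective by blast

lemma orthonormal_columns_norm:
  fixes B :: "real^'r^'n"
  assumes "transpose B ** B = mat 1"
  shows "norm (B *v x) = norm x"
proof -
  have "(B *v x) \<bullet> (B *v x) = x \<bullet> x"
    by (simp only: inner_matrix_transpose matrix_vector_mul_assoc assms matrix_vector_mul_lid)
  then show ?thesis by (simp add: norm_eq_sqrt_inner)
qed

lemma orthonormal_columns_projection:
  fixes B :: "real^'r^'n"
  assumes B: "transpose B ** B = mat 1"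
  shows "is_orthogonal_projection ((*v) (B ** transpose B))"
    and "dim (range ((*v) (B ** transpose B))) = CARD('r)"
proof -
  have idem: "(B ** transpose B) ** (B ** transpose B) = B ** transpose B"
    by (metis B matrix_mul_assoc matrix_mul_rid)
  have "transpose (B ** transpose B) = B ** transpose B"
    by (simp add: matrix_transpose_mul)
  then show "is_orthogonal_projection ((*v) (B ** transpose B))"
    unfolding is_orthogonal_projection_def
    by (simp add: matrix_vector_mul_assoc idem symmetric_matrix_inner)
  have "range ((*v) (B ** transpose B)) = range ((*v) B)"
  proof
    show "range ((*v) (B ** transpose B)) \<subseteq> range ((*v) B)"
      by (auto simp flip: matrix_vector_mul_assoc)
    show "range ((*v) B) \<subseteq> range ((*v) (B ** transpose B))"
      by (metis B image_subsetI matrix_mul_assoc matrix_mul_rid matrix_vector_mul_assoc rangeI)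
  qed
  also have "dim \<dots> = dim (UNIV :: (real^'r) set)"
    using dim_image_eq[OF matrix_vector_mul_linear, of B UNIV] orthonormal_columns_inj[OF B] by simp
  finally show "dim (range ((*v) (B ** transpose B))) = CARD('r)" by simp
qed

definition polar_factor :: "real^'m^'n \<Rightarrow> real^'m^'n" where
  "polar_factor A = A ** inv_sqrt (transpose A ** A)"

lemma polar_factor_orthonormal:
  fixes A :: "real^'m^'n"
  assumes "inj ((*v) A)"
  shows "transpose (polar_factor A) ** polar_factor A = mat 1"
proof -
  define S where "S = inv_sqrt (transpose A ** A)"
  have G: "sym_posdef (transpose A ** A)" by (rule sym_posdef_gram[OF assms])
  have "transpose S = S" using inv_sqrt(1)[OF G] by (simp add: S_def sym_posdef_def)
  have "(transpose A ** A) ** (S ** S) = mat 1" using inv_sqrt(2)[OF G] by (simp add: S_def)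
  then have "S ** (S ** (transpose A ** A)) = mat 1"
    by (simp add: matrix_left_right_inverse matrix_mul_assoc)
  then have "S ** (transpose A ** A) ** S = mat 1"
    by (simp add: matrix_left_right_inverse matrix_mul_assoc)
  then show ?thesis
    by (simp add: polar_factor_def S_def[symmetric] matrix_transpose_mul \<open>transpose S = S\<close> matrix_mul_assoc)
qed

lemma polar_factor_projection_fixes:
  fixes A :: "real^'m^'n"
  assumes "inj ((*v) A)"
  shows "polar_factor A ** transpose (polar_factor A) ** A = A"
proof -
  define S where "S = inv_sqrt (transpose A ** A)"
  have G: "sym_posdef (transpose A ** A)" by (rule sym_posdef_gram[OF assms])
  have "transpose S = S" using inv_sqrt(1)[OF G] by (simp add: S_def sym_posdef_def)
  have "(transpose A ** A) ** (S ** S) = mat 1" using inv_sqrt(2)[OF G] by (simp add: S_def)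
  then have "(S ** S) ** (transpose A ** A) = mat 1" by (simp add: matrix_left_right_inverse)
  then show ?thesis
    by (simp add: polar_factor_def S_def[symmetric] matrix_transpose_mul \<open>transpose S = S\<close>)
      (metis matrix_mul_assoc matrix_mul_rid)
qed

lemma spec_norm_bound: "norm (A *v x) \<le> spec_norm A * norm x"
  unfolding spec_norm_def
  by (rule onorm) (simp add: linear_conv_bounded_linear matrix_vector_mul_linear)

lemma spec_norm_nonneg: "0 \<le> spec_norm A"
  unfolding spec_norm_def
  by (rule onorm_pos_le) (simp add: linear_conv_bounded_linear matrix_vector_mul_linear)

lemma svd_range_preimage:
  fixes U :: "real^'r^'n" and S :: "real^'r^'r" and V :: "real^'r^'m"
  assumes V: "transpose V ** V = mat 1" and S: "is_diagonal S" and "0 < s" and s: "\<forall>i. s \<le> S $ i $ i"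
  obtains y where "(U ** S ** transpose V) *v y = U *v w" and "s * norm y \<le> norm w"
proof
  define c where "c = (\<chi> i. w $ i / S $ i $ i)"
  have Spos: "0 < S $ i $ i" for i using \<open>0 < s\<close> s by (meson less_le_trans)
  then have "S $ i $ i \<noteq> 0" for i by (metis less_irrefl)
  then have "S *v c = w" by (simp add: diagonal_matrix_vector_mult[OF S] c_def vec_eq_iff)
  moreover have "transpose V *v (V *v c) = c"
    by (simp only: matrix_vector_mul_assoc V matrix_vector_mul_lid)
  ultimately show "(U ** S ** transpose V) *v (V *v c) = U *v w"
    by (simp only: matrix_vector_mul_assoc[symmetric])
  have "norm (s *\<^sub>R c) \<le> norm w"
  proof (rule norm_le_componentwise_cart)
    fix i
    have "s * \<bar>w $ i\<bar> \<le> S $ i $ i * \<bar>w $ i\<bar>" using s by (simp add: mult_right_mono)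
    then show "norm ((s *\<^sub>R c) $ i) \<le> norm (w $ i)"
      using \<open>0 < s\<close> Spos[of i] by (simp add: c_def abs_mult field_simps)
  qed
  then show "s * norm (V *v c) \<le> norm w"
    using \<open>0 < s\<close> by (simp add: orthonormal_columns_norm[OF V])
qed

lemma weighted_wedin_bound:
  fixes R :: "real^'n^'n" and Ut U :: "real^'r^'n" and St S :: "real^'r^'r" and Vt V :: "real^'r^'m"
    and w :: "real^'r"
  assumes Q: "is_orthogonal_projection Q" and Q_fixes: "\<And>w. Q (R *v (Ut *v w)) = R *v (Ut *v w)"
    and R_upper: "\<And>x. norm (R *v x) \<le> \<rho>\<^sub>1 * norm x" and R_lower: "\<And>x. \<rho>\<^sub>0 * norm x \<le> norm (R *v x)"
    and "0 < \<rho>\<^sub>0" and U: "transpose U ** U = mat 1" and V: "transpose V ** V = mat 1"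
    and S: "is_diagonal S" and "0 < s" and s: "\<forall>i. s \<le> S $ i $ i"
  defines "z \<equiv> R *v (U *v w)"
  shows "norm (z - Q z)
           \<le> \<rho>\<^sub>1 / \<rho>\<^sub>0 * (spec_norm (Ut ** St ** transpose Vt - U ** S ** transpose V) / s) * norm z"
proof -
  define X where "X = U ** S ** transpose V"
  define E where "E = Ut ** St ** transpose Vt - X"
  obtain y where Xy: "X *v y = U *v w" and y: "s * norm y \<le> norm w"
    using svd_range_preimage[OF V S \<open>0 < s\<close> s] unfolding X_def by blast
  define d where "d = R *v (- (E *v y))"
  have Qt: "Q (R *v ((Ut ** St ** transpose Vt) *v y)) = R *v ((Ut ** St ** transpose Vt) *v y)"
    using Q_fixes by (simp flip: matrix_vector_mul_assoc)
  have "z = R *v ((Ut ** St ** transpose Vt) *v y) + d"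
    by (simp add: z_def d_def E_def Xy[symmetric] matrix_vector_mult_diff_rdistrib
        flip: matrix_vector_right_distrib)
  then have "z - Q z = d - Q d"
    using Q Qt by (simp add: is_orthogonal_projection_def linear_add)
  have "0 \<le> \<rho>\<^sub>1"
    using order_trans[OF norm_ge_zero R_upper[of "axis undefined 1"]] by simp
  have "\<rho>\<^sub>0 * (s * norm y) \<le> \<rho>\<^sub>0 * norm (U *v w)"
    using y \<open>0 < \<rho>\<^sub>0\<close> by (simp add: orthonormal_columns_norm[OF U])
  also have "\<dots> \<le> norm z" unfolding z_def by (rule R_lower)
  finally have "norm y \<le> norm z / (\<rho>\<^sub>0 * s)"
    using \<open>0 < \<rho>\<^sub>0\<close> \<open>0 < s\<close> by (simp add: field_simps)
  have "norm (z - Q z) \<le> norm d"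
    using \<open>z - Q z = d - Q d\<close> orthogonal_projection_residual_le[OF Q] by simp
  also have "\<dots> \<le> \<rho>\<^sub>1 * norm (E *v y)" using R_upper[of "- (E *v y)"] by (simp add: d_def)
  also have "\<dots> \<le> \<rho>\<^sub>1 * (spec_norm E * norm y)"
    using \<open>0 \<le> \<rho>\<^sub>1\<close> by (intro mult_left_mono spec_norm_bound)
  also have "\<dots> \<le> \<rho>\<^sub>1 * (spec_norm E * (norm z / (\<rho>\<^sub>0 * s)))"
    using \<open>0 \<le> \<rho>\<^sub>1\<close> \<open>norm y \<le> norm z / (\<rho>\<^sub>0 * s)\<close>
    by (intro mult_left_mono spec_norm_nonneg) auto
  also have "\<dots> = \<rho>\<^sub>1 / \<rho>\<^sub>0 * (spec_norm E / s) * norm z" by simp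
  finally show ?thesis by (simp add: E_def X_def)
qed

lemma polar_projection_diff_le:
  fixes R :: "real^'n^'n" and Ut U :: "real^'r^'n" and St S :: "real^'r^'r" and Vt V :: "real^'r^'m"
  assumes R: "inj ((*v) R)"
    and R_upper: "\<And>x. norm (R *v x) \<le> \<rho>\<^sub>1 * norm x" and R_lower: "\<And>x. \<rho>\<^sub>0 * norm x \<le> norm (R *v x)"
    and "0 < \<rho>\<^sub>0" and Ut: "transpose Ut ** Ut = mat 1" and U: "transpose U ** U = mat 1"
    and V: "transpose V ** V = mat 1" and S: "is_diagonal S" and "0 < s" and s: "\<forall>i. s \<le> S $ i $ i"
  defines "Bt \<equiv> polar_factor (R ** Ut)" and "B \<equiv> polar_factor (R ** U)"
  shows "norm ((Bt ** transpose Bt - B ** transpose B) *v y)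
           \<le> \<rho>\<^sub>1 / \<rho>\<^sub>0 * (spec_norm (Ut ** St ** transpose Vt - U ** S ** transpose V) / s) * norm y"
proof -
  define \<kappa> where "\<kappa> = \<rho>\<^sub>1 / \<rho>\<^sub>0 * (spec_norm (Ut ** St ** transpose Vt - U ** S ** transpose V) / s)"
  have inj_R_mult: "inj ((*v) (R ** W))" if "transpose W ** W = mat 1" for W :: "real^'r^'n"
    using inj_compose[OF R orthonormal_columns_inj[OF that]] by (simp add: comp_def matrix_vector_mul_assoc)
  have Bt: "transpose Bt ** Bt = mat 1" and B: "transpose B ** B = mat 1"
    unfolding Bt_def B_def using polar_factor_orthonormal inj_R_mult Ut U by blast+
  note Pt_proj = orthonormal_columns_projection[OF Bt] and P_proj = orthonormal_columns_projection[OF B]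
  have Pt_fixes: "(Bt ** transpose Bt) *v (R *v (Ut *v w)) = R *v (Ut *v w)" for w
    using polar_factor_projection_fixes[OF inj_R_mult[OF Ut]]
    by (simp add: Bt_def matrix_vector_mul_assoc)
  have "0 \<le> \<rho>\<^sub>1"
    using order_trans[OF norm_ge_zero R_upper[of "axis undefined 1"]] by simp
  then have "0 \<le> \<kappa>" using \<open>0 < \<rho>\<^sub>0\<close> \<open>0 < s\<close> by (simp add: \<kappa>_def spec_norm_nonneg)
  have gap: "norm ((B ** transpose B) *v z - (Bt ** transpose Bt) *v ((B ** transpose B) *v z))
               \<le> \<kappa> * norm ((B ** transpose B) *v z)" for z
  proof -
    have "(B ** transpose B) *v z = R *v (U *v (inv_sqrt (transpose (R ** U) ** (R ** U)) *v (transpose B *v z)))"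
      by (simp only: B_def polar_factor_def matrix_vector_mul_assoc[symmetric])
    then show ?thesis
      unfolding \<kappa>_def
      by (metis weighted_wedin_bound[OF Pt_proj(1) Pt_fixes R_upper R_lower \<open>0 < \<rho>\<^sub>0\<close> U V S \<open>0 < s\<close> s])
  qed
  have "norm ((Bt ** transpose Bt) *v y - (B ** transpose B) *v y) \<le> \<kappa> * norm y"
    using orthogonal_projection_diff_le[OF P_proj(1) Pt_proj(1) _ \<open>0 \<le> \<kappa>\<close> gap] P_proj(2) Pt_proj(2)
    by simp
  then show ?thesis by (simp add: \<kappa>_def matrix_vector_mult_diff_rdistrib)
qed

section \<open>Singular values, condition numbers and weighted norms\<close>

lemma sing_vals_svd:
  fixes U :: "real^'r^'n" and S :: "real^'r^'r" and V :: "real^'r^'m"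
  assumes U: "transpose U ** U = mat 1" and V: "transpose V ** V = mat 1"
    and S: "is_diagonal S" and S_pos: "\<forall>i. S $ i $ i > 0"
  shows "sing_vals (U ** S ** transpose V) = range (\<lambda>i. S $ i $ i)"
proof -
  define T where "T = S ** S"
  have T: "T *v u = (\<chi> i. (S $ i $ i)\<^sup>2 * u $ i)" for u
    by (simp add: T_def flip: matrix_vector_mul_assoc)
      (simp add: diagonal_matrix_vector_mult[OF S] power2_eq_square mult.assoc)
  have "transpose S = S" using S unfolding is_diagonal_def transpose_def vec_eq_iff by (simp, metis)
  then have XtX: "transpose (U ** S ** transpose V) ** (U ** S ** transpose V) = V ** T ** transpose V"
    by (simp add: T_def matrix_transpose_mul matrix_mul_assoc[symmetric])
      (metis U matrix_mul_assoc matrix_mul_lid)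
  have VtV: "transpose V *v (V *v u) = u" for u
    by (simp only: matrix_vector_mul_assoc V matrix_vector_mul_lid)
  have "sqrt e \<in> range (\<lambda>i. S $ i $ i)" if "e \<noteq> 0" "v \<noteq> 0" "(V ** T ** transpose V) *v v = e *\<^sub>R v" for e v
  proof -
    define u where "u = transpose V *v v"
    have "V *v (T *v u) = e *\<^sub>R v" using that(3) by (simp only: u_def matrix_vector_mul_assoc matrix_mul_assoc)
    then have Tu: "T *v u = e *\<^sub>R u" by (metis VtV matrix_vector_mult_scaleR u_def)
    have "u \<noteq> 0" using \<open>V *v (T *v u) = e *\<^sub>R v\<close> that(1,2) by auto
    then obtain i where "u $ i \<noteq> 0" by (auto simp: vec_eq_iff)
    then have "e = (S $ i $ i)\<^sup>2" using arg_cong[where f="\<lambda>x. x $ i", OF Tu] by (simp add: T)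
    then show ?thesis using S_pos by (simp add: less_imp_le)
  qed
  moreover have "\<exists>e v. S $ i $ i = sqrt e \<and> e \<noteq> 0 \<and> v \<noteq> 0 \<and> (V ** T ** transpose V) *v v = e *\<^sub>R v" for i
  proof (intro exI conjI)
    show "S $ i $ i = sqrt ((S $ i $ i)\<^sup>2)" using S_pos by (simp add: less_imp_le)
    show "(S $ i $ i)\<^sup>2 \<noteq> 0" using S_pos by (metis less_irrefl power_eq_0_iff)
    show "V *v axis i 1 \<noteq> 0" by (metis VtV axis_eq_0_iff matrix_vector_mult_0_right zero_neq_one)
    have "T *v axis i 1 = (S $ i $ i)\<^sup>2 *\<^sub>R axis i 1" by (simp add: T vec_eq_iff axis_def)
    then show "(V ** T ** transpose V) *v (V *v axis i 1) = (S $ i $ i)\<^sup>2 *\<^sub>R (V *v axis i 1)"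
      by (simp only: matrix_vector_mul_assoc[symmetric] VtV matrix_vector_mult_scaleR)
  qed
  ultimately show ?thesis unfolding sing_vals_def XtX by blast
qed

lemma sigma_min_svd:
  fixes U :: "real^'r^'n" and S :: "real^'r^'r" and V :: "real^'r^'m"
  assumes "transpose U ** U = mat 1" "transpose V ** V = mat 1" "is_diagonal S" "\<forall>i. S $ i $ i > 0"
  shows "sigma_min (U ** S ** transpose V) = Min (range (\<lambda>i. S $ i $ i))"
  unfolding sigma_min_def sing_vals_svd[OF assms] by (simp add: cInf_eq_Min)

lemma Max_range_powr:
  fixes f :: "'a::finite \<Rightarrow> real"
  assumes "\<forall>i. 0 < f i" "0 \<le> p"
  shows "Max (range (\<lambda>i. f i powr p)) = Max (range f) powr p"
proof (rule Max_eqI)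
  have "Max (range f) \<in> range f" by (rule Max_in) auto
  then obtain i where "Max (range f) = f i" by blast
  then show "Max (range f) powr p \<in> range (\<lambda>i. f i powr p)" using rangeI[of "\<lambda>i. f i powr p" i] by simp
  show "y \<le> Max (range f) powr p" if "y \<in> range (\<lambda>i. f i powr p)" for y
    using that assms by (auto intro!: powr_mono2 simp: less_imp_le)
qed simp

lemma Min_range_powr:
  fixes f :: "'a::finite \<Rightarrow> real"
  assumes "\<forall>i. 0 < f i" "0 \<le> p"
  shows "Min (range (\<lambda>i. f i powr p)) = Min (range f) powr p"
proof (rule Min_eqI)
  have "Min (range f) \<in> range f" by (rule Min_in) auto
  then obtain i where "Min (range f) = f i" by blast
  then show "Min (range f) powr p \<in> range (\<lambda>i. f i powr p)" using rangeI[of "\<lambda>i. f i powr p" i] by simp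
  show "Min (range f) powr p \<le> y" if "y \<in> range (\<lambda>i. f i powr p)" for y
    using that assms \<open>Min (range f) \<in> range f\<close> by (auto intro!: powr_mono2 simp: less_imp_le)
qed simp

lemma cond_diag_powr:
  assumes L: "\<forall>i. L $ i $ i > 0" and "0 \<le> p"
  shows "cond (diag_powr L p) = (Max (range (\<lambda>i. L $ i $ i)) / Min (range (\<lambda>i. L $ i $ i))) powr p"
proof -
  have "\<forall>i. diag_powr L p $ i $ i > 0" using L by (metis diag_powr_nth_diag less_irrefl powr_gt_zero)
  then have "sing_vals (diag_powr L p) = range (\<lambda>i. L $ i $ i powr p)"
    using sing_vals_svd[of "mat 1" "mat 1" "diag_powr L p"] by (simp add: is_diagonal_diag_powr)
  then show ?thesis
    using Max_range_powr[OF L \<open>0 \<le> p\<close>] Min_range_powr[OF L \<open>0 \<le> p\<close>] Min_in[of "range (\<lambda>i. L $ i $ i)"] L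
    by (auto simp: cond_def sigma_max_def sigma_min_def cSup_eq_Max cInf_eq_Min powr_divide less_imp_le)
qed

lemma norm_diag_powr_le:
  assumes "0 \<le> p" and L: "\<forall>i. 0 < L $ i $ i" "\<forall>i. L $ i $ i \<le> u"
  shows "norm (diag_powr L p *v x) \<le> u powr p * norm x"
proof -
  have "norm (diag_powr L p *v x) \<le> norm (u powr p *\<^sub>R x)"
  proof (rule norm_le_componentwise_cart)
    fix i
    have "L $ i $ i powr p \<le> u powr p" using assms by (intro powr_mono2) (auto simp: less_imp_le)
    then show "norm ((diag_powr L p *v x) $ i) \<le> norm ((u powr p *\<^sub>R x) $ i)"
      by (simp add: diag_powr_mult_vector abs_mult mult_right_mono)
  qed
  then show ?thesis by simp
qed

lemma norm_diag_powr_ge: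
  assumes "0 \<le> p" "0 < l" and L: "\<forall>i. l \<le> L $ i $ i"
  shows "l powr p * norm x \<le> norm (diag_powr L p *v x)"
proof -
  have "norm (l powr p *\<^sub>R x) \<le> norm (diag_powr L p *v x)"
  proof (rule norm_le_componentwise_cart)
    fix i
    have "l powr p \<le> L $ i $ i powr p" using assms by (intro powr_mono2) auto
    then show "norm ((l powr p *\<^sub>R x) $ i) \<le> norm ((diag_powr L p *v x) $ i)"
      using assms by (simp add: diag_powr_mult_vector abs_mult mult_right_mono)
  qed
  then show ?thesis by simp
qed

lemma vec_Mnorm_diag_powr:
  assumes "\<forall>i. 0 < L $ i $ i"
  shows "vec_Mnorm (diag_powr L (p + p)) x = norm (diag_powr L p *v x)"
proof -
  have "diag_powr L (p + p) *v x = diag_powr L p *v (diag_powr L p *v x)"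
    by (simp only: matrix_vector_mul_assoc diag_powr_mult[OF assms])
  then have "(diag_powr L (p + p) *v x) \<bullet> x = (diag_powr L p *v x) \<bullet> (diag_powr L p *v x)"
    by (simp only:) (subst inner_matrix_transpose, simp)
  then show ?thesis by (simp add: vec_Mnorm_def norm_eq_sqrt_inner)
qed

lemma mat_Mnorm_le:
  fixes M A :: "real^'n^'n"
  assumes "\<And>x. x \<noteq> 0 \<Longrightarrow> 0 < vec_Mnorm M x" and "\<And>x. vec_Mnorm M (A *v x) \<le> K * vec_Mnorm M x"
  shows "mat_Mnorm M A \<le> K"
  unfolding mat_Mnorm_def
proof (rule cSUP_least)
  show "{x :: real^'n. x \<noteq> 0} \<noteq> {}"
    using axis_eq_0_iff[of undefined "1::real"] by auto
  show "vec_Mnorm M (A *v x) / vec_Mnorm M x \<le> K" if "x \<in> {x. x \<noteq> 0}" for x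
    using assms that by (simp add: pos_divide_le_eq)
qed

lemma weighted_projection_conj:
  fixes R :: "real^'n^'n" and U :: "real^'r^'n"
  assumes "transpose R = R"
  defines "W \<equiv> U ** inv_sqrt (transpose U ** (R ** R) ** U)"
  shows "R ** (W ** transpose W ** (R ** R)) = polar_factor (R ** U) ** transpose (polar_factor (R ** U)) ** R"
proof -
  have "polar_factor (R ** U) = R ** W"
    using assms by (simp add: polar_factor_def W_def matrix_transpose_mul matrix_mul_assoc)
  then show ?thesis
    using assms by (simp add: matrix_transpose_mul matrix_mul_assoc)
qed

lemma matrix_diff_ldistrib: "A ** (B - C) = A ** B - A ** (C :: 'a::ring_1^'n^'m)"
  by (simp add: matrix_matrix_mult_def vec_eq_iff sum_subtractf right_diff_distrib)

lemma matrix_diff_rdistrib: "(A - B) ** C = A ** C - B ** (C :: 'a::ring_1^'n^'m)"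
  by (simp add: matrix_matrix_mult_def vec_eq_iff sum_subtractf left_diff_distrib)

lemma mat_Mnorm_diag_weighted_projection_diff_le:
  fixes L :: "real^'n^'n" and Ut U :: "real^'r^'n"
  assumes L: "\<forall>i. 0 < L $ i $ i"
  defines "R \<equiv> diag_powr L (1/8)" and "M \<equiv> diag_powr L (1/4)"
  defines "Wt \<equiv> Ut ** inv_sqrt (transpose Ut ** M ** Ut)" and "W \<equiv> U ** inv_sqrt (transpose U ** M ** U)"
  defines "Bt \<equiv> polar_factor (R ** Ut)" and "B \<equiv> polar_factor (R ** U)"
  assumes bound: "\<And>y. norm ((Bt ** transpose Bt - B ** transpose B) *v y) \<le> K * norm y"
  shows "mat_Mnorm M (Wt ** transpose Wt ** M - W ** transpose W ** M) \<le> K"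
proof (rule mat_Mnorm_le)
  have M: "M = R ** R" using diag_powr_mult[OF L, of "1/8" "1/8"] by (simp add: R_def M_def)
  have Mnorm: "vec_Mnorm M x = norm (R *v x)" for x
    using vec_Mnorm_diag_powr[OF L, of "1/8"] by (simp add: R_def M_def)
  show "0 < vec_Mnorm M x" if "x \<noteq> 0" for x
    using sym_posdef_inj[OF sym_posdef_diag_powr[OF L]] that unfolding Mnorm R_def
    by (metis injD matrix_vector_mult_0_right zero_less_norm_iff)
  have "R ** (Wt ** transpose Wt ** M - W ** transpose W ** M) = (Bt ** transpose Bt - B ** transpose B) ** R"
    using weighted_projection_conj[of R Ut] weighted_projection_conj[of R U]
    by (simp add: R_def M Wt_def W_def Bt_def B_def matrix_diff_ldistrib matrix_diff_rdistrib)
  then show "vec_Mnorm M ((Wt ** transpose Wt ** M - W ** transpose W ** M) *v x) \<le> K * vec_Mnorm M x" for x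
    using bound[of "R *v x"] by (simp add: Mnorm matrix_vector_mul_assoc)
qed

lemma diag_extreme_ratio_powr_le_cond:
  assumes L: "\<forall>i. 0 < L $ i $ i" and "0 \<le> p" "p \<le> q"
  shows "Max (range (\<lambda>i. L $ i $ i)) powr p / Min (range (\<lambda>i. L $ i $ i)) powr p \<le> cond (diag_powr L q)"
proof -
  define lmax where "lmax = Max (range (\<lambda>i. L $ i $ i))"
  define lmin where "lmin = Min (range (\<lambda>i. L $ i $ i))"
  have "lmin \<in> range (\<lambda>i. L $ i $ i)" unfolding lmin_def by (auto intro: Min_in)
  then have "0 < lmin" using L by auto
  have "lmin \<le> L $ i $ i" "L $ i $ i \<le> lmax" for i by (simp_all add: lmin_def lmax_def)
  then have "lmin \<le> lmax" by (meson order.trans)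
  then have "(lmax / lmin) powr p \<le> (lmax / lmin) powr q"
    using \<open>0 < lmin\<close> \<open>p \<le> q\<close> by (intro powr_mono) auto
  then show ?thesis
    using \<open>0 < lmin\<close> \<open>lmin \<le> lmax\<close> \<open>0 \<le> p\<close> \<open>p \<le> q\<close>
    by (simp add: cond_diag_powr[OF L] lmax_def[symmetric] lmin_def[symmetric] powr_divide)
qed

theorem lemma3p6:
  fixes L :: "real^'n1^'n1"
    and Xt X :: "real^'n2^'n1"
    and Ut U :: "real^'r^'n1"
    and St S :: "real^'r^'r"
    and Vt V :: "real^'r^'n2"
  assumes L_diag: "is_diagonal L" and L_pos: "\<forall>i. L $ i $ i > 0"
    and rk_t: "rank Xt = CARD('r)" and rk: "rank X = CARD('r)"
    and svd_t: "Xt = Ut ** St ** transpose Vt"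
    and svd: "X = U ** S ** transpose V"
    and Ut_orth: "transpose Ut ** Ut = mat 1" and U_orth: "transpose U ** U = mat 1"
    and Vt_orth: "transpose Vt ** Vt = mat 1" and V_orth: "transpose V ** V = mat 1"
    and St_diag: "is_diagonal St" and St_pos: "\<forall>i. St $ i $ i > 0"
    and S_diag: "is_diagonal S" and S_pos: "\<forall>i. S $ i $ i > 0"
  shows
   "let L4 = diag_powr L (1/4);
        Utt = Ut ** inv_sqrt (transpose Ut ** L4 ** Ut);
        Utl = U ** inv_sqrt (transpose U ** L4 ** U)
    in mat_Mnorm L4 (Utt ** transpose Utt ** L4 - Utl ** transpose Utl ** L4)
       \<le> cond (diag_powr L (3/8)) / sigma_min X * spec_norm (Xt - X)"
proof -
  define lmax where "lmax = Max (range (\<lambda>i. L $ i $ i))"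
  define lmin where "lmin = Min (range (\<lambda>i. L $ i $ i))"
  define s where "s = Min (range (\<lambda>i. S $ i $ i))"
  define \<kappa> where "\<kappa> = lmax powr (1/8) / lmin powr (1/8) * (spec_norm (Xt - X) / s)"
  have "lmin \<in> range (\<lambda>i. L $ i $ i)" "s \<in> range (\<lambda>i. S $ i $ i)"
    unfolding lmin_def s_def by (auto intro: Min_in)
  then have "0 < lmin" "0 < s" using L_pos S_pos by auto
  have L_bounds: "\<forall>i. lmin \<le> L $ i $ i" "\<forall>i. L $ i $ i \<le> lmax" and s_le: "\<forall>i. s \<le> S $ i $ i"
    by (simp_all add: lmin_def lmax_def s_def)
  have projection_gap: "norm ((polar_factor (diag_powr L (1/8) ** Ut) ** transpose (polar_factor (diag_powr L (1/8) ** Ut))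
              - polar_factor (diag_powr L (1/8) ** U) ** transpose (polar_factor (diag_powr L (1/8) ** U))) *v y)
        \<le> \<kappa> * norm y" for y
    unfolding \<kappa>_def svd_t svd
    by (rule polar_projection_diff_le[OF sym_posdef_inj[OF sym_posdef_diag_powr[OF L_pos]]
          norm_diag_powr_le[OF _ L_pos L_bounds(2)] norm_diag_powr_ge[OF _ \<open>0 < lmin\<close> L_bounds(1)]
          _ Ut_orth U_orth V_orth S_diag \<open>0 < s\<close> s_le]) (use \<open>0 < lmin\<close> in auto)
  have "\<kappa> \<le> cond (diag_powr L (3/8)) * (spec_norm (Xt - X) / s)"
    using diag_extreme_ratio_powr_le_cond[OF L_pos, of "1/8" "3/8"] \<open>0 < s\<close> spec_norm_nonneg[of "Xt - X"]
    unfolding \<kappa>_def lmax_def lmin_def by (intro mult_right_mono) auto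
  moreover have "sigma_min X = s" unfolding svd sigma_min_svd[OF U_orth V_orth S_diag S_pos] s_def ..
  ultimately have "\<kappa> \<le> cond (diag_powr L (3/8)) / sigma_min X * spec_norm (Xt - X)" by simp
  then show ?thesis
    unfolding Let_def
    by (rule order_trans[OF mat_Mnorm_diag_weighted_projection_diff_le[OF L_pos projection_gap]])
qed

end
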